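(* Let $R=k[x_1,\dots,x_n]$ with the standard grading, let $G$ be a group acting on $R$ by permuting the variables, and let $I\subset R$ be a homogeneous ideal. Let $\preceq$ be a monomial order. If $G$ acts monomially on $I$ up to degree $d$ and $\mathrm{in}_{\preceq}(I)$ is generated in degrees $\le d$, then $g(\mathrm{in}_{\preceq}(I))=\mathrm{in}_{\preceq_{g^{-1}}}(I)$ for every $g\in G$.
   Context: For $h\in R$, $\mathrm{mon}(h)$ is the set of monomials appearing in $h$ with nonzero coefficient. $G$ acts monomially on $I$ up to degree $d$ if for every $h\in I$ of degree $\le d$ and every $g\in G$ there is $h'\in I$ with $\mathrm{mon}(h')=\mathrm{mon}(g(h))$. For a monomial order $\preceq$ and $g\in G$, $\preceq_g$ is the monomial order defined by $a\preceq_g b\iff g(a)\preceq g(b)$. *)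

theory Defs
  imports "HOL-Library.Poly_Mapping"
begin

text \<open>Monomials are finitely supported exponent vectors; polynomials are finitely supported
  maps from monomials to coefficients, with the convolution product.\<close>

type_synonym 'v monom = "'v \<Rightarrow>\<^sub>0 nat"
type_synonym ('v, 'k) mpoly = "'v monom \<Rightarrow>\<^sub>0 'k"

definition mon :: "('v, 'k::zero) mpoly \<Rightarrow> 'v monom set" where
  "mon h = Poly_Mapping.keys h"

definition mdeg :: "'v monom \<Rightarrow> nat" where
  "mdeg m = (\<Sum>v\<in>Poly_Mapping.keys m. Poly_Mapping.lookup m v)"

definition deg_le :: "('v, 'k::zero) mpoly \<Rightarrow> nat \<Rightarrow> bool" where
  "deg_le h d \<longleftrightarrow> (\<forall>m\<in>mon h. mdeg m \<le> d)"

definition homogeneous :: "('v, 'k::zero) mpoly \<Rightarrow> bool" where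
  "homogeneous h \<longleftrightarrow> (\<exists>t. \<forall>m\<in>mon h. mdeg m = t)"

definition is_ideal :: "('v, 'k::comm_ring_1) mpoly set \<Rightarrow> bool" where
  "is_ideal I \<longleftrightarrow> 0 \<in> I \<and> (\<forall>a\<in>I. \<forall>b\<in>I. a + b \<in> I) \<and> (\<forall>r. \<forall>a\<in>I. r * a \<in> I)"

definition ideal_gen :: "('v, 'k::comm_ring_1) mpoly set \<Rightarrow> ('v, 'k) mpoly set" where
  "ideal_gen S = \<Inter>{J. is_ideal J \<and> S \<subseteq> J}"

definition homogeneous_ideal :: "('v, 'k::comm_ring_1) mpoly set \<Rightarrow> bool" where
  "homogeneous_ideal I \<longleftrightarrow> is_ideal I \<and> I = ideal_gen {f\<in>I. homogeneous f}"

text \<open>monomial orders (as a relation "ord a b" meaning a \<preceq> b)\<close>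
definition monomial_order :: "('v monom \<Rightarrow> 'v monom \<Rightarrow> bool) \<Rightarrow> bool" where
  "monomial_order ord \<longleftrightarrow>
     (\<forall>a. ord a a) \<and> (\<forall>a b. ord a b \<and> ord b a \<longrightarrow> a = b) \<and>
     (\<forall>a b c. ord a b \<and> ord b c \<longrightarrow> ord a c) \<and> (\<forall>a b. ord a b \<or> ord b a) \<and>
     (\<forall>a. ord 0 a) \<and> (\<forall>a b c. ord a b \<longrightarrow> ord (a + c) (b + c))"

text \<open>Action of a permutation g of the variables: x_v \<mapsto> x_(g v).
  On exponent vectors: (g m)(j) = m(g^{-1} j).\<close>
definition act_mon :: "('v::finite \<Rightarrow> 'v) \<Rightarrow> 'v monom \<Rightarrow> 'v monom" where
  "act_mon g m = Abs_poly_mapping (\<lambda>j. Poly_Mapping.lookup m (inv g j))"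

definition act_poly :: "('v::finite \<Rightarrow> 'v) \<Rightarrow> ('v, 'k::comm_monoid_add) mpoly \<Rightarrow> ('v, 'k) mpoly" where
  "act_poly g h = (\<Sum>m\<in>Poly_Mapping.keys h. Poly_Mapping.single (act_mon g m) (Poly_Mapping.lookup h m))"

definition perm_group :: "('v \<Rightarrow> 'v) set \<Rightarrow> bool" where
  "perm_group G \<longleftrightarrow> id \<in> G \<and> (\<forall>g\<in>G. bij g \<and> inv g \<in> G) \<and> (\<forall>g\<in>G. \<forall>h\<in>G. g \<circ> h \<in> G)"

definition acts_monomially :: "('v::finite \<Rightarrow> 'v) set \<Rightarrow> ('v, 'k::comm_monoid_add) mpoly set \<Rightarrow> nat \<Rightarrow> bool" where
  "acts_monomially G I d \<longleftrightarrow>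
     (\<forall>h\<in>I. deg_le h d \<longrightarrow> (\<forall>g\<in>G. \<exists>h'\<in>I. mon h' = mon (act_poly g h)))"

definition twist_order :: "('v monom \<Rightarrow> 'v monom \<Rightarrow> bool) \<Rightarrow> ('v::finite \<Rightarrow> 'v) \<Rightarrow> 'v monom \<Rightarrow> 'v monom \<Rightarrow> bool" where
  "twist_order ord g a b \<longleftrightarrow> ord (act_mon g a) (act_mon g b)"

definition lead_mon :: "('v monom \<Rightarrow> 'v monom \<Rightarrow> bool) \<Rightarrow> ('v, 'k::zero) mpoly \<Rightarrow> 'v monom" where
  "lead_mon ord h = (THE m. m \<in> Poly_Mapping.keys h \<and> (\<forall>m'\<in>Poly_Mapping.keys h. ord m' m))"

definition initial_ideal :: "('v monom \<Rightarrow> 'v monom \<Rightarrow> bool) \<Rightarrow> ('v, 'k::comm_ring_1) mpoly set \<Rightarrow> ('v, 'k) mpoly set" where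
  "initial_ideal ord I = ideal_gen {Poly_Mapping.single (lead_mon ord h) 1 | h. h \<in> I \<and> h \<noteq> 0}"

definition generated_in_degrees_le :: "('v, 'k::comm_ring_1) mpoly set \<Rightarrow> nat \<Rightarrow> bool" where
  "generated_in_degrees_le J d \<longleftrightarrow> J = ideal_gen {f\<in>J. deg_le f d}"

end

theory Submission
  imports Defs "HOL.Vector_Spaces"
begin

text \<open>Write \<open>\<preceq>'\<close> for the order \<open>\<preceq>\<close>_{g^-1} and let \<open>L\<close>, \<open>L'\<close> be the sets of leading monomials of
  \<open>I\<close> for \<open>\<preceq>\<close> and \<open>\<preceq>'\<close>. Both initial ideals consist of the polynomials supported on \<open>L\<close>,
  resp. \<open>L'\<close>, so it suffices to show \<open>g(L) = L'\<close>.

  Every \<open>\<mu> \<in> L\<close> is a multiple of some \<open>\<nu> \<in> L\<close> of degree at most \<open>d\<close>, and \<open>\<nu>\<close> is the leading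
  monomial of a homogeneous \<open>h \<in> I\<close> of the same degree. The monomial action yields \<open>h' \<in> I\<close>
  with \<open>mon(h') = g(mon(h))\<close>, whose \<open>\<preceq>'\<close>-leading monomial is \<open>g(\<nu>)\<close>. As \<open>L'\<close> is closed under
  multiplication by monomials, \<open>g(L) \<subseteq> L'\<close>.

  For any monomial order the leading monomials of degree \<open>t\<close> are exactly \<open>dim I\<^sub>t\<close> many:
  one element of \<open>I\<^sub>t\<close> per leading monomial gives a basis. Since \<open>g\<close> permutes the monomials
  of each degree, \<open>g(L) \<subseteq> L'\<close> is therefore an equality degree by degree.\<close>

section \<open>Total orders and leading monomials\<close>

definition total_order :: "('a \<Rightarrow> 'a \<Rightarrow> bool) \<Rightarrow> bool" where
  "total_order ord \<longleftrightarrow> (\<forall>a. ord a a) \<and> (\<forall>a b. ord a b \<and> ord b a \<longrightarrow> a = b) \<and>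
     (\<forall>a b c. ord a b \<and> ord b c \<longrightarrow> ord a c) \<and> (\<forall>a b. ord a b \<or> ord b a)"

lemma monomial_order_iff_total_order:
  "monomial_order ord \<longleftrightarrow>
    total_order ord \<and> (\<forall>a. ord 0 a) \<and> (\<forall>a b c. ord a b \<longrightarrow> ord (a + c) (b + c))"
  unfolding monomial_order_def total_order_def by blast

lemma monomial_order_imp_total_order: "monomial_order ord \<Longrightarrow> total_order ord"
  unfolding monomial_order_iff_total_order by blast

lemma total_order_refl: "total_order ord \<Longrightarrow> ord a a"
  unfolding total_order_def by blast

lemma total_order_antisym: "total_order ord \<Longrightarrow> ord a b \<Longrightarrow> ord b a \<Longrightarrow> a = b"
  unfolding total_order_def by blast

lemma total_order_trans: "total_order ord \<Longrightarrow> ord a b \<Longrightarrow> ord b c \<Longrightarrow> ord a c"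
  unfolding total_order_def by blast

lemma total_order_finite_has_max:
  assumes "total_order ord" "finite S" "S \<noteq> {}"
  shows "\<exists>x\<in>S. \<forall>y\<in>S. ord y x"
  using assms(2,3)
proof (induction S rule: finite_ne_induct)
  case (singleton x)
  then show ?case using total_order_refl[OF assms(1)] by simp
next
  case (insert x F)
  then obtain z where "z \<in> F" "\<forall>y\<in>F. ord y z" by blast
  then show ?case using assms(1) unfolding total_order_def by (metis insert_iff)
qed

lemma lead_mon_eqI:
  assumes "total_order ord" "\<mu> \<in> Poly_Mapping.keys h" "\<And>m. m \<in> Poly_Mapping.keys h \<Longrightarrow> ord m \<mu>"
  shows "lead_mon ord h = \<mu>"
  unfolding lead_mon_def
  using assms total_order_antisym[OF assms(1)] by (intro the_equality) blast+

lemma lead_mon_max: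
  assumes "total_order ord" "h \<noteq> 0"
  shows "lead_mon ord h \<in> Poly_Mapping.keys h \<and> (\<forall>m\<in>Poly_Mapping.keys h. ord m (lead_mon ord h))"
proof -
  obtain \<mu> where "\<mu> \<in> Poly_Mapping.keys h" "\<forall>m\<in>Poly_Mapping.keys h. ord m \<mu>"
    using total_order_finite_has_max[OF assms(1) finite_keys] assms(2) by auto
  moreover from this have "lead_mon ord h = \<mu>" by (intro lead_mon_eqI[OF assms(1)]) auto
  ultimately show ?thesis by simp
qed

lemma lead_mon_in_keys: "total_order ord \<Longrightarrow> h \<noteq> 0 \<Longrightarrow> lead_mon ord h \<in> Poly_Mapping.keys h"
  using lead_mon_max by blast

lemma lead_mon_greatest: "total_order ord \<Longrightarrow> m \<in> Poly_Mapping.keys h \<Longrightarrow> ord m (lead_mon ord h)"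
  using lead_mon_max[of ord h] by fastforce

definition lead_monomials ::
  "('v monom \<Rightarrow> 'v monom \<Rightarrow> bool) \<Rightarrow> ('v, 'k::zero) mpoly set \<Rightarrow> 'v monom set" where
  "lead_monomials ord W = lead_mon ord ` (W - {0})"


section \<open>Monomial ideals and initial ideals\<close>

lemma lookup_single_mult_add:
  "Poly_Mapping.lookup (Poly_Mapping.single a c * p) (a + m) = c * Poly_Mapping.lookup (p::('v, 'k::comm_ring_1) mpoly) m"
  by (simp add: lookup_mult lookup_single when_mult Sum_any_right_distrib mult_when eq_commute[of m])

lemma lookup_single_mult_not_add:
  assumes "\<And>\<mu>. m \<noteq> a + \<mu>"
  shows "Poly_Mapping.lookup (Poly_Mapping.single a c * (p::('v, 'k::comm_ring_1) mpoly)) m = 0"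
proof -
  have "m \<notin> Poly_Mapping.keys (Poly_Mapping.single a c * p)"
    using assms keys_mult[of "Poly_Mapping.single a c" p] by (auto split: if_splits)
  then show ?thesis by (simp add: in_keys_iff)
qed

lemma keys_single_one_mult:
  "Poly_Mapping.keys (Poly_Mapping.single a (1::'k::comm_ring_1) * (h::('v,'k) mpoly)) = (+) a ` Poly_Mapping.keys h"
  using keys_mult[of "Poly_Mapping.single a (1::'k)" h]
  by (auto simp: in_keys_iff lookup_single_mult_add)

lemma poly_mapping_sum_single: "p = (\<Sum>m\<in>Poly_Mapping.keys p. Poly_Mapping.single m (Poly_Mapping.lookup p m))"
  by (simp add: poly_mapping_eq_iff lookup_sum lookup_single fun_eq_iff when_def in_keys_iff)

lemma is_ideal_ideal_gen: "is_ideal (ideal_gen S)"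
  unfolding ideal_gen_def is_ideal_def by auto

lemma ideal_gen_superset: "S \<subseteq> ideal_gen S"
  unfolding ideal_gen_def by auto

lemma ideal_gen_least: "is_ideal J \<Longrightarrow> S \<subseteq> J \<Longrightarrow> ideal_gen S \<subseteq> J"
  unfolding ideal_gen_def by auto

lemma ideal_zero: "is_ideal I \<Longrightarrow> 0 \<in> I"
  unfolding is_ideal_def by auto

lemma ideal_add: "is_ideal I \<Longrightarrow> a \<in> I \<Longrightarrow> b \<in> I \<Longrightarrow> a + b \<in> I"
  unfolding is_ideal_def by auto

lemma ideal_mult: "is_ideal I \<Longrightarrow> a \<in> I \<Longrightarrow> r * a \<in> I"
  unfolding is_ideal_def by auto

lemma ideal_sum: "is_ideal I \<Longrightarrow> (\<And>x. x \<in> A \<Longrightarrow> f x \<in> I) \<Longrightarrow> sum f A \<in> I"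
  by (induction A rule: infinite_finite_induct) (auto simp: ideal_zero ideal_add)

lemma is_ideal_upward_closed_support:
  assumes up: "\<And>\<alpha> \<mu>. \<mu> \<in> L \<Longrightarrow> \<alpha> + \<mu> \<in> L"
  shows "is_ideal {f :: ('v, 'k::comm_ring_1) mpoly. Poly_Mapping.keys f \<subseteq> L}"
proof -
  have "Poly_Mapping.keys (r * a) \<subseteq> L" if "Poly_Mapping.keys a \<subseteq> L" for r a :: "('v, 'k) mpoly"
  proof -
    have "x + y \<in> L" if "y \<in> Poly_Mapping.keys a" for x y
      using up \<open>Poly_Mapping.keys a \<subseteq> L\<close> that by blast
    then show ?thesis using keys_mult[of r a] by blast
  qed
  moreover have "Poly_Mapping.keys (a + b) \<subseteq> L"
    if "Poly_Mapping.keys a \<subseteq> L" "Poly_Mapping.keys b \<subseteq> L" for a b :: "('v, 'k) mpoly"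
    using keys_add[of a b] that by blast
  ultimately show ?thesis unfolding is_ideal_def by simp
qed

lemma keys_ideal_gen:
  fixes T :: "('v, 'k::comm_ring_1) mpoly set"
  assumes "f \<in> ideal_gen T" "m \<in> Poly_Mapping.keys f"
  obtains t \<mu> \<alpha> where "t \<in> T" "\<mu> \<in> Poly_Mapping.keys t" "m = \<alpha> + \<mu>"
proof -
  define L where "L = {\<alpha> + \<mu> | \<alpha> \<mu> t. t \<in> T \<and> \<mu> \<in> Poly_Mapping.keys t}"
  have "\<beta> + \<nu> \<in> L" if "\<nu> \<in> L" for \<beta> \<nu>
  proof -
    obtain \<alpha> \<mu> t where "\<nu> = \<alpha> + \<mu>" "t \<in> T" "\<mu> \<in> Poly_Mapping.keys t"
      using \<open>\<nu> \<in> L\<close> unfolding L_def by blast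
    moreover have "\<beta> + (\<alpha> + \<mu>) = (\<beta> + \<alpha>) + \<mu>" by (rule add.assoc[symmetric])
    ultimately show ?thesis unfolding L_def by blast
  qed
  then have "is_ideal {f :: ('v, 'k) mpoly. Poly_Mapping.keys f \<subseteq> L}"
    by (rule is_ideal_upward_closed_support)
  moreover have "T \<subseteq> {f. Poly_Mapping.keys f \<subseteq> L}"
    unfolding L_def by (force intro: exI[of _ 0])
  ultimately have "ideal_gen T \<subseteq> {f. Poly_Mapping.keys f \<subseteq> L}" by (rule ideal_gen_least)
  then have "m \<in> L" using assms by blast
  then show ?thesis using that unfolding L_def by blast
qed

lemma ideal_gen_monomials:
  fixes L :: "'v monom set"
  assumes up: "\<And>\<alpha> \<mu>. \<mu> \<in> L \<Longrightarrow> \<alpha> + \<mu> \<in> L"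
  shows "ideal_gen ((\<lambda>\<mu>. Poly_Mapping.single \<mu> (1::'k::comm_ring_1)) ` L) =
    {f. Poly_Mapping.keys f \<subseteq> L}"
proof
  show "ideal_gen ((\<lambda>\<mu>. Poly_Mapping.single \<mu> (1::'k)) ` L) \<subseteq> {f. Poly_Mapping.keys f \<subseteq> L}"
    by (rule ideal_gen_least[OF is_ideal_upward_closed_support[OF up]]) auto
next
  show "{f. Poly_Mapping.keys f \<subseteq> L} \<subseteq> ideal_gen ((\<lambda>\<mu>. Poly_Mapping.single \<mu> (1::'k)) ` L)"
  proof
    fix f :: "('v, 'k) mpoly"
    assume f: "f \<in> {f. Poly_Mapping.keys f \<subseteq> L}"
    have "Poly_Mapping.single m (Poly_Mapping.lookup f m) \<in> ideal_gen ((\<lambda>\<mu>. Poly_Mapping.single \<mu> 1) ` L)"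
      if "m \<in> Poly_Mapping.keys f" for m
    proof -
      have "Poly_Mapping.single m 1 \<in> (\<lambda>\<mu>. Poly_Mapping.single \<mu> (1::'k)) ` L"
        using that f by auto
      then have "Poly_Mapping.single m 1 \<in> ideal_gen ((\<lambda>\<mu>. Poly_Mapping.single \<mu> (1::'k)) ` L)"
        by (rule subsetD[OF ideal_gen_superset])
      then have "Poly_Mapping.single 0 (Poly_Mapping.lookup f m) * Poly_Mapping.single m 1
          \<in> ideal_gen ((\<lambda>\<mu>. Poly_Mapping.single \<mu> 1) ` L)"
        by (rule ideal_mult[OF is_ideal_ideal_gen])
      then show ?thesis by (simp add: mult_single)
    qed
    then have "(\<Sum>m\<in>Poly_Mapping.keys f. Poly_Mapping.single m (Poly_Mapping.lookup f m))
        \<in> ideal_gen ((\<lambda>\<mu>. Poly_Mapping.single \<mu> 1) ` L)"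
      by (rule ideal_sum[OF is_ideal_ideal_gen])
    then show "f \<in> ideal_gen ((\<lambda>\<mu>. Poly_Mapping.single \<mu> 1) ` L)"
      by (subst poly_mapping_sum_single[of f])
  qed
qed

lemma lead_mon_single_one_mult:
  assumes "monomial_order ord" "h \<noteq> 0"
  shows "lead_mon ord (Poly_Mapping.single \<alpha> (1::'k::comm_ring_1) * h) = \<alpha> + lead_mon ord h"
proof -
  have tot: "total_order ord" using assms(1) by (rule monomial_order_imp_total_order)
  have "ord (\<alpha> + m) (\<alpha> + lead_mon ord h)" if "m \<in> Poly_Mapping.keys h" for m
    using lead_mon_greatest[OF tot that] assms(1)
    unfolding monomial_order_def by (metis add.commute)
  then show ?thesis
    using lead_mon_in_keys[OF tot assms(2)]
    by (intro lead_mon_eqI[OF tot]) (auto simp: keys_single_one_mult)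
qed

lemma lead_monomials_add:
  assumes "is_ideal I" "monomial_order ord" "\<mu> \<in> lead_monomials ord I"
  shows "\<alpha> + \<mu> \<in> lead_monomials ord (I :: ('v, 'k::comm_ring_1) mpoly set)"
proof -
  obtain h where h: "h \<in> I" "h \<noteq> 0" "\<mu> = lead_mon ord h"
    using assms(3) unfolding lead_monomials_def by blast
  let ?h = "Poly_Mapping.single \<alpha> 1 * h"
  have "?h \<in> I" using assms(1) h(1) by (rule ideal_mult)
  moreover have "?h \<noteq> 0"
    using lead_mon_in_keys[OF monomial_order_imp_total_order[OF assms(2)] h(2)]
    by (auto simp: keys_single_one_mult simp flip: keys_eq_empty)
  ultimately show ?thesis
    unfolding lead_monomials_def using lead_mon_single_one_mult[OF assms(2) h(2)] h(3)
    by (metis DiffI image_eqI singletonD)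
qed

lemma initial_ideal_eq_monomial_ideal:
  assumes "is_ideal I" "monomial_order ord"
  shows "initial_ideal ord I = {f. Poly_Mapping.keys f \<subseteq> lead_monomials ord I}"
proof -
  have "initial_ideal ord I = ideal_gen ((\<lambda>\<mu>. Poly_Mapping.single \<mu> 1) ` lead_monomials ord I)"
    unfolding initial_ideal_def lead_monomials_def by (rule arg_cong[where f = ideal_gen]) blast
  also have "\<dots> = {f. Poly_Mapping.keys f \<subseteq> lead_monomials ord I}"
    using lead_monomials_add[OF assms] by (rule ideal_gen_monomials)
  finally show ?thesis .
qed


section \<open>Homogeneous components\<close>

lemma mdeg_eq_sum:
  assumes "finite S" "Poly_Mapping.keys m \<subseteq> S"
  shows "mdeg m = (\<Sum>v\<in>S. Poly_Mapping.lookup m v)"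
  unfolding mdeg_def using assms by (intro sum.mono_neutral_left) (auto simp: in_keys_iff)

lemma mdeg_add: "mdeg (a + b) = mdeg a + mdeg b"
proof -
  let ?S = "Poly_Mapping.keys a \<union> Poly_Mapping.keys b"
  have "Poly_Mapping.keys (a + b) \<subseteq> ?S" by (rule keys_add)
  then show ?thesis
    by (simp add: mdeg_eq_sum[of ?S] lookup_add sum.distrib)
qed

lemma finite_mdeg_eq: "finite {m :: 'v::finite monom. mdeg m = t}"
proof -
  have "Poly_Mapping.lookup ` {m :: 'v monom. mdeg m = t} \<subseteq> {f. \<forall>v. f v \<in> {..t}}"
    by (auto simp: mdeg_eq_sum[of UNIV] intro: member_le_sum)
  moreover have "finite {f :: 'v \<Rightarrow> nat. \<forall>v. f v \<in> {..t}}"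
    using finite_set_of_finite_funs[of "UNIV :: 'v set" "{..t}"] by simp
  ultimately have "finite (Poly_Mapping.lookup ` {m :: 'v monom. mdeg m = t})"
    by (rule finite_subset)
  moreover have "inj_on Poly_Mapping.lookup {m :: 'v monom. mdeg m = t}"
    by (intro inj_onI poly_mapping_eqI) simp
  ultimately show ?thesis by (rule finite_imageD)
qed

definition hom_component :: "nat \<Rightarrow> ('v, 'k::zero) mpoly \<Rightarrow> ('v, 'k) mpoly" where
  "hom_component t f = Abs_poly_mapping (\<lambda>m. if mdeg m = t then Poly_Mapping.lookup f m else 0)"

lemma lookup_hom_component:
  "Poly_Mapping.lookup (hom_component t f) m = (if mdeg m = t then Poly_Mapping.lookup f m else 0)"
proof -
  have "finite {m. (if mdeg m = t then Poly_Mapping.lookup f m else 0) \<noteq> 0}"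
    by (rule finite_subset[OF _ finite_keys[of f]]) (auto simp: in_keys_iff split: if_splits)
  then show ?thesis unfolding hom_component_def by simp
qed

lemma keys_hom_component: "Poly_Mapping.keys (hom_component t f) = {m \<in> Poly_Mapping.keys f. mdeg m = t}"
  by (auto simp: in_keys_iff lookup_hom_component split: if_splits)

lemma hom_component_add: "hom_component t (a + b) = hom_component t a + hom_component t b"
  by (simp add: poly_mapping_eq_iff fun_eq_iff lookup_hom_component lookup_add)

lemma hom_component_zero: "hom_component t 0 = 0"
  by (simp add: poly_mapping_eq_iff fun_eq_iff lookup_hom_component)

lemma hom_component_sum: "hom_component t (sum f A) = (\<Sum>x\<in>A. hom_component t (f x))"
  by (induction A rule: infinite_finite_induct) (simp_all add: hom_component_zero hom_component_add)

lemma hom_component_single_mult: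
  fixes a :: "('v, 'k::comm_ring_1) mpoly"
  shows "hom_component t (Poly_Mapping.single \<alpha> c * a) =
    (if mdeg \<alpha> \<le> t then Poly_Mapping.single \<alpha> c * hom_component (t - mdeg \<alpha>) a else 0)"
proof (rule poly_mapping_eqI)
  fix m
  show "Poly_Mapping.lookup (hom_component t (Poly_Mapping.single \<alpha> c * a)) m =
    Poly_Mapping.lookup (if mdeg \<alpha> \<le> t then Poly_Mapping.single \<alpha> c * hom_component (t - mdeg \<alpha>) a else 0) m"
  proof (cases "\<exists>\<mu>. m = \<alpha> + \<mu>")
    case True
    then obtain \<mu> where "m = \<alpha> + \<mu>" by blast
    then show ?thesis
      by (auto simp: lookup_hom_component lookup_single_mult_add mdeg_add)
  next
    case False
    then show ?thesis
      by (simp add: lookup_hom_component lookup_single_mult_not_add)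
  qed
qed

lemma hom_component_mult:
  fixes a :: "('v, 'k::comm_ring_1) mpoly"
  shows "hom_component t (r * a) = (\<Sum>\<alpha>\<in>Poly_Mapping.keys r.
    if mdeg \<alpha> \<le> t then Poly_Mapping.single \<alpha> (Poly_Mapping.lookup r \<alpha>) * hom_component (t - mdeg \<alpha>) a else 0)"
proof -
  have "r * a = (\<Sum>\<alpha>\<in>Poly_Mapping.keys r. Poly_Mapping.single \<alpha> (Poly_Mapping.lookup r \<alpha>) * a)"
    by (subst poly_mapping_sum_single[of r]) (simp add: sum_distrib_right)
  then show ?thesis by (simp add: hom_component_sum hom_component_single_mult)
qed

lemma hom_component_homogeneous:
  assumes "homogeneous f"
  obtains t0 where "\<And>t. hom_component t f = (if t = t0 then f else 0)"
proof -
  obtain t0 where "\<And>m. m \<in> Poly_Mapping.keys f \<Longrightarrow> mdeg m = t0"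
    using assms unfolding homogeneous_def mon_def by blast
  then have "hom_component t f = (if t = t0 then f else 0)" for t
    by (auto simp: poly_mapping_eq_iff fun_eq_iff lookup_hom_component in_keys_iff)
  then show ?thesis by (rule that)
qed

lemma hom_component_in_ideal:
  assumes "homogeneous_ideal I" "f \<in> I"
  shows "hom_component t f \<in> I"
proof -
  have I: "is_ideal I" using assms(1) unfolding homogeneous_ideal_def by blast
  define J where "J = {f. \<forall>t. hom_component t f \<in> I}"
  have "hom_component t (r * a) \<in> I" if "a \<in> J" for r a t
    using that unfolding hom_component_mult
    by (auto intro!: ideal_sum[OF I] simp: J_def ideal_zero[OF I] ideal_mult[OF I])
  then have "r * a \<in> J" if "a \<in> J" for r a
    using that unfolding J_def by blast
  moreover have "a + b \<in> J" if "a \<in> J" "b \<in> J" for a b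
    using that unfolding J_def by (simp add: hom_component_add ideal_add[OF I])
  moreover have "0 \<in> J"
    unfolding J_def using ideal_zero[OF I] by (simp add: hom_component_zero)
  ultimately have "is_ideal J" unfolding is_ideal_def by blast
  moreover have "{f \<in> I. homogeneous f} \<subseteq> J"
  proof
    fix h assume h: "h \<in> {f \<in> I. homogeneous f}"
    then obtain t0 where "\<And>t. hom_component t h = (if t = t0 then h else 0)"
      using hom_component_homogeneous by blast
    then show "h \<in> J" using h ideal_zero[OF I] unfolding J_def by simp
  qed
  ultimately have "ideal_gen {f \<in> I. homogeneous f} \<subseteq> J" by (rule ideal_gen_least)
  then show ?thesis using assms unfolding homogeneous_ideal_def J_def by blast
qed

lemma
  assumes "total_order ord" "h \<noteq> 0"
  shows hom_component_lead_mon_nonzero: "hom_component (mdeg (lead_mon ord h)) h \<noteq> 0"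
    and lead_mon_hom_component: "lead_mon ord (hom_component (mdeg (lead_mon ord h)) h) = lead_mon ord h"
proof -
  have in_keys: "lead_mon ord h \<in> Poly_Mapping.keys (hom_component (mdeg (lead_mon ord h)) h)"
    using lead_mon_in_keys[OF assms] by (simp add: keys_hom_component)
  then show "hom_component (mdeg (lead_mon ord h)) h \<noteq> 0" by auto
  show "lead_mon ord (hom_component (mdeg (lead_mon ord h)) h) = lead_mon ord h"
    using in_keys lead_mon_greatest[OF assms(1)] by (intro lead_mon_eqI[OF assms(1)]) (auto simp: keys_hom_component)
qed

lemma lead_monomials_homogeneous_witness:
  assumes "homogeneous_ideal I" "total_order ord" "\<nu> \<in> lead_monomials ord I"
  obtains h where "h \<in> I" "h \<noteq> 0" "lead_mon ord h = \<nu>" "Poly_Mapping.keys h \<subseteq> {m. mdeg m = mdeg \<nu>}"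
proof -
  obtain h0 where h0: "h0 \<in> I" "h0 \<noteq> 0" "\<nu> = lead_mon ord h0"
    using assms(3) unfolding lead_monomials_def by blast
  show ?thesis
  proof (rule that)
    show "hom_component (mdeg \<nu>) h0 \<in> I" using hom_component_in_ideal[OF assms(1) h0(1)] .
    show "hom_component (mdeg \<nu>) h0 \<noteq> 0" "lead_mon ord (hom_component (mdeg \<nu>) h0) = \<nu>"
      using hom_component_lead_mon_nonzero[OF assms(2) h0(2)] lead_mon_hom_component[OF assms(2) h0(2)]
      unfolding h0(3) by simp_all
    show "Poly_Mapping.keys (hom_component (mdeg \<nu>) h0) \<subseteq> {m. mdeg m = mdeg \<nu>}"
      by (auto simp: keys_hom_component)
  qed
qed


section \<open>Counting leading monomials by dimension\<close>

interpretation mpoly: vector_space "\<lambda>c p. Poly_Mapping.single 0 c * (p :: ('v, 'k::field) mpoly)"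
  by unfold_locales
    (simp_all add: distrib_left distrib_right single_add mult_single mult.assoc[symmetric])

lemma lookup_single_zero_mult:
  "Poly_Mapping.lookup (Poly_Mapping.single 0 c * p) m = c * Poly_Mapping.lookup (p :: ('v, 'k::comm_ring_1) mpoly) m"
  using lookup_single_mult_add[of 0 c p m] by simp

lemma keys_single_zero_mult_subset:
  "Poly_Mapping.keys (Poly_Mapping.single 0 c * p) \<subseteq> Poly_Mapping.keys (p :: ('v, 'k::comm_ring_1) mpoly)"
  by (auto simp: in_keys_iff lookup_single_zero_mult)

lemma mpoly_independent_if_inj_on_lead_mon:
  fixes C :: "('v, 'k::field) mpoly set"
  assumes ord: "total_order ord" and "finite C" "0 \<notin> C" and inj: "inj_on (lead_mon ord) C"
  shows "mpoly.independent C"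
proof
  assume "mpoly.dependent C"
  then obtain u v0 where v0: "v0 \<in> C" "u v0 \<noteq> 0"
    and sum_zero: "(\<Sum>v\<in>C. Poly_Mapping.single 0 (u v) * v) = 0"
    using mpoly.dependent_finite[OF \<open>finite C\<close>] by blast
  define S where "S = {v \<in> C. u v \<noteq> 0}"
  obtain w where w: "w \<in> S" and w_max: "\<And>v. v \<in> S \<Longrightarrow> ord (lead_mon ord v) (lead_mon ord w)"
    using total_order_finite_has_max[OF ord, of "lead_mon ord ` S"] \<open>finite C\<close> v0
    unfolding S_def by fastforce
  \<comment> \<open>Compare coefficients at the largest leading monomial occurring with a nonzero scalar.\<close>
  define lw where "lw = lead_mon ord w"
  have others: "u v * Poly_Mapping.lookup v lw = 0" if "v \<in> C" "v \<noteq> w" for v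
  proof (cases "u v = 0")
    case False
    then have "v \<in> S" using that unfolding S_def by blast
    have "lead_mon ord v \<noteq> lw" using inj that w unfolding S_def inj_on_def lw_def by blast
    then have "lw \<notin> Poly_Mapping.keys v"
      using w_max[OF \<open>v \<in> S\<close>] lead_mon_greatest[OF ord] total_order_antisym[OF ord]
      unfolding lw_def by blast
    then show ?thesis by (simp add: in_keys_iff)
  qed simp
  have "0 = Poly_Mapping.lookup (\<Sum>v\<in>C. Poly_Mapping.single 0 (u v) * v) lw"
    using sum_zero by simp
  also have "\<dots> = (\<Sum>v\<in>C. u v * Poly_Mapping.lookup v lw)"
    by (simp add: lookup_sum lookup_single_zero_mult)
  also have "\<dots> = u w * Poly_Mapping.lookup w lw"
  proof -
    have "(\<Sum>v\<in>C - {w}. u v * Poly_Mapping.lookup v lw) = 0"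
      using others by (intro sum.neutral) blast
    moreover have "w \<in> C" using w unfolding S_def by blast
    ultimately show ?thesis by (simp add: sum.remove[OF \<open>finite C\<close>])
  qed
  finally have "u w * Poly_Mapping.lookup w lw = 0" by simp
  moreover have "w \<noteq> 0" "u w \<noteq> 0" using w \<open>0 \<notin> C\<close> unfolding S_def by auto
  ultimately show False
    using lead_mon_in_keys[OF ord \<open>w \<noteq> 0\<close>] by (simp add: lw_def in_keys_iff)
qed

lemma keys_cancel_lead_mon:
  fixes f b :: "('v, 'k::field) mpoly"
  assumes ord: "total_order ord" and "f \<noteq> 0" "b \<noteq> 0" and same_lead: "lead_mon ord b = lead_mon ord f"
    and c: "c = - Poly_Mapping.lookup f (lead_mon ord f) / Poly_Mapping.lookup b (lead_mon ord f)"
    and \<mu>: "\<mu> \<in> Poly_Mapping.keys (f + Poly_Mapping.single 0 c * b)"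
  shows "ord \<mu> (lead_mon ord f)" "\<mu> \<noteq> lead_mon ord f"
proof -
  have "\<mu> \<in> Poly_Mapping.keys f \<or> \<mu> \<in> Poly_Mapping.keys b"
    using \<mu> keys_add[of f] keys_single_zero_mult_subset[of c b] by blast
  then show "ord \<mu> (lead_mon ord f)"
    using lead_mon_greatest[OF ord] same_lead by metis
  have "Poly_Mapping.lookup b (lead_mon ord f) \<noteq> 0"
    using lead_mon_in_keys[OF ord \<open>b \<noteq> 0\<close>] same_lead by (simp add: in_keys_iff)
  then have "Poly_Mapping.lookup (f + Poly_Mapping.single 0 c * b) (lead_mon ord f) = 0"
    unfolding lookup_add lookup_single_zero_mult c by simp
  then show "\<mu> \<noteq> lead_mon ord f" using \<mu> by (auto simp: in_keys_iff)
qed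

lemma subspace_subset_mpoly_span:
  fixes W B :: "('v, 'k::field) mpoly set"
  assumes ord: "total_order ord" and "finite M" and W: "mpoly.subspace W"
    and WM: "\<And>f. f \<in> W \<Longrightarrow> Poly_Mapping.keys f \<subseteq> M"
    and "B \<subseteq> W" "0 \<notin> B"
    and leads: "\<And>f. f \<in> W \<Longrightarrow> f \<noteq> 0 \<Longrightarrow> \<exists>b\<in>B. lead_mon ord b = lead_mon ord f"
  shows "W \<subseteq> mpoly.span B"
proof
  \<comment> \<open>Cancelling the leading monomial of \<open>f\<close> against some \<open>b \<in> B\<close> shrinks \<open>D f\<close>.\<close>
  define D where "D f = {\<nu> \<in> M. \<exists>\<mu>\<in>Poly_Mapping.keys f. ord \<nu> \<mu>}" for f :: "('v, 'k) mpoly"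
  fix f assume "f \<in> W"
  then show "f \<in> mpoly.span B"
  proof (induction "card (D f)" arbitrary: f rule: less_induct)
    case less
    show ?case
    proof (cases "f = 0")
      case True
      then show ?thesis by (simp add: mpoly.span_zero)
    next
      case False
      obtain b where b: "b \<in> B" "lead_mon ord b = lead_mon ord f"
        using leads less.prems False by blast
      have "b \<in> W" "b \<noteq> 0" using b \<open>B \<subseteq> W\<close> \<open>0 \<notin> B\<close> by auto
      define c where "c = - Poly_Mapping.lookup f (lead_mon ord f) / Poly_Mapping.lookup b (lead_mon ord f)"
      define f' where "f' = f + Poly_Mapping.single 0 c * b"
      note below = keys_cancel_lead_mon[OF ord False \<open>b \<noteq> 0\<close> b(2) c_def, folded f'_def]
      have "f' \<in> W"
        unfolding f'_def using W less.prems \<open>b \<in> W\<close> by (simp add: mpoly.subspace_add mpoly.subspace_scale)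
      have "D f' \<subseteq> D f"
        using below(1) lead_mon_in_keys[OF ord False] total_order_trans[OF ord] unfolding D_def by blast
      moreover have "lead_mon ord f \<in> D f - D f'"
        using lead_mon_in_keys[OF ord False] WM[OF less.prems] total_order_refl[OF ord]
          below total_order_antisym[OF ord] unfolding D_def by blast
      moreover have "finite (D f)" using \<open>finite M\<close> unfolding D_def by simp
      ultimately have "card (D f') < card (D f)" by (intro psubset_card_mono) auto
      then have "f' \<in> mpoly.span B" using less.hyps \<open>f' \<in> W\<close> by blast
      moreover have "Poly_Mapping.single 0 c * b \<in> mpoly.span B"
        using b(1) by (simp add: mpoly.span_base mpoly.span_scale)
      ultimately have "f' - Poly_Mapping.single 0 c * b \<in> mpoly.span B" by (rule mpoly.span_diff)
      then show ?thesis unfolding f'_def by simp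
    qed
  qed
qed

lemma card_lead_monomials_eq_dim:
  fixes W :: "('v, 'k::field) mpoly set"
  assumes ord: "total_order ord" and "finite M" and W: "mpoly.subspace W"
    and WM: "\<And>f. f \<in> W \<Longrightarrow> Poly_Mapping.keys f \<subseteq> M"
  shows "card (lead_monomials ord W) = mpoly.dim W"
proof -
  have "\<forall>\<mu>\<in>lead_monomials ord W. \<exists>b. b \<in> W - {0} \<and> lead_mon ord b = \<mu>"
    unfolding lead_monomials_def by blast
  from bchoice[OF this] obtain rep
    where rep: "\<forall>\<mu>\<in>lead_monomials ord W. rep \<mu> \<in> W - {0} \<and> lead_mon ord (rep \<mu>) = \<mu>" ..
  define B where "B = rep ` lead_monomials ord W"
  have "inj_on rep (lead_monomials ord W)"
    by (rule inj_on_inverseI[where g = "lead_mon ord"]) (use rep in blast)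
  then have card_B: "card B = card (lead_monomials ord W)"
    unfolding B_def by (rule card_image)
  have "lead_monomials ord W \<subseteq> M"
    using WM lead_mon_in_keys[OF ord] unfolding lead_monomials_def by blast
  then have "finite B"
    unfolding B_def using \<open>finite M\<close> by (simp add: finite_subset)
  have "B \<subseteq> W" "0 \<notin> B" using rep unfolding B_def by auto
  have "inj_on (lead_mon ord) B"
    by (rule inj_on_inverseI[where g = rep]) (use rep in \<open>auto simp: B_def\<close>)
  then have "mpoly.independent B"
    by (rule mpoly_independent_if_inj_on_lead_mon[OF ord \<open>finite B\<close> \<open>0 \<notin> B\<close>])
  moreover have "W \<subseteq> mpoly.span B"
  proof (rule subspace_subset_mpoly_span[OF ord \<open>finite M\<close> W WM \<open>B \<subseteq> W\<close> \<open>0 \<notin> B\<close>])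
    fix f assume "f \<in> W" "f \<noteq> 0"
    then have "lead_mon ord f \<in> lead_monomials ord W" unfolding lead_monomials_def by blast
    then have "rep (lead_mon ord f) \<in> B" "lead_mon ord (rep (lead_mon ord f)) = lead_mon ord f"
      using rep unfolding B_def by auto
    then show "\<exists>b\<in>B. lead_mon ord b = lead_mon ord f" ..
  qed
  ultimately show ?thesis
    using mpoly.basis_card_eq_dim[OF \<open>B \<subseteq> W\<close>] card_B by simp
qed

definition degree_part :: "('v, 'k::zero) mpoly set \<Rightarrow> nat \<Rightarrow> ('v, 'k) mpoly set" where
  "degree_part I t = {f \<in> I. Poly_Mapping.keys f \<subseteq> {m. mdeg m = t}}"

lemma subspace_degree_part:
  assumes "is_ideal (I :: ('v, 'k::field) mpoly set)"
  shows "mpoly.subspace (degree_part I t)"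
proof -
  have "0 \<in> degree_part I t" using ideal_zero[OF assms] by (simp add: degree_part_def)
  moreover have "x + y \<in> degree_part I t" if "x \<in> degree_part I t" "y \<in> degree_part I t" for x y
    using that keys_add[of x y] ideal_add[OF assms] unfolding degree_part_def by blast
  moreover have "Poly_Mapping.single 0 c * x \<in> degree_part I t" if "x \<in> degree_part I t" for c x
    using that keys_single_zero_mult_subset[of c x] ideal_mult[OF assms] unfolding degree_part_def by blast
  ultimately show ?thesis unfolding mpoly.subspace_def by blast
qed

lemma lead_monomials_degree_part:
  assumes "homogeneous_ideal I" "total_order ord"
  shows "lead_monomials ord (degree_part I t) = lead_monomials ord I \<inter> {m. mdeg m = t}"
proof
  show "lead_monomials ord (degree_part I t) \<subseteq> lead_monomials ord I \<inter> {m. mdeg m = t}"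
  proof
    fix \<nu> assume "\<nu> \<in> lead_monomials ord (degree_part I t)"
    then obtain f where "f \<in> I" "f \<noteq> 0" "Poly_Mapping.keys f \<subseteq> {m. mdeg m = t}" "\<nu> = lead_mon ord f"
      unfolding lead_monomials_def degree_part_def by auto
    then show "\<nu> \<in> lead_monomials ord I \<inter> {m. mdeg m = t}"
      using lead_mon_in_keys[OF assms(2) \<open>f \<noteq> 0\<close>] unfolding lead_monomials_def by auto
  qed
  show "lead_monomials ord I \<inter> {m. mdeg m = t} \<subseteq> lead_monomials ord (degree_part I t)"
  proof
    fix \<nu> assume "\<nu> \<in> lead_monomials ord I \<inter> {m. mdeg m = t}"
    then obtain h where "h \<in> I" "h \<noteq> 0" "lead_mon ord h = \<nu>" "Poly_Mapping.keys h \<subseteq> {m. mdeg m = t}"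
      using lead_monomials_homogeneous_witness[OF assms] by (metis IntD1 IntD2 mem_Collect_eq)
    then show "\<nu> \<in> lead_monomials ord (degree_part I t)"
      unfolding lead_monomials_def degree_part_def by auto
  qed
qed

lemma card_lead_monomials_degree_eq_dim:
  fixes I :: "('v::finite, 'k::field) mpoly set"
  assumes "homogeneous_ideal I" "total_order ord"
  shows "card (lead_monomials ord I \<inter> {m. mdeg m = t}) = mpoly.dim (degree_part I t)"
proof -
  have "is_ideal I" using assms(1) unfolding homogeneous_ideal_def by blast
  then show ?thesis
    unfolding lead_monomials_degree_part[OF assms, symmetric]
    by (rule card_lead_monomials_eq_dim[OF assms(2) finite_mdeg_eq[of t] subspace_degree_part])
      (simp add: degree_part_def)
qed


section \<open>Permuting the variables\<close>

lemma lookup_act_mon: "Poly_Mapping.lookup (act_mon g m) v = Poly_Mapping.lookup m (inv g v)"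
  unfolding act_mon_def by (simp add: lookup_Abs_poly_mapping)

lemma act_mon_add: "act_mon g (a + b) = act_mon g a + act_mon g b"
  by (simp add: poly_mapping_eq_iff fun_eq_iff lookup_act_mon lookup_add)

lemma act_mon_zero: "act_mon g 0 = 0"
  by (simp add: poly_mapping_eq_iff fun_eq_iff lookup_act_mon)

lemma act_mon_inv_act_mon: "bij g \<Longrightarrow> act_mon (inv g) (act_mon g m) = m"
  by (simp add: poly_mapping_eq_iff fun_eq_iff lookup_act_mon inv_inv_eq bij_is_inj)

lemma act_mon_act_mon_inv: "bij g \<Longrightarrow> act_mon g (act_mon (inv g) m) = m"
  using act_mon_inv_act_mon[of "inv g" m] by (simp add: bij_imp_bij_inv inv_inv_eq)

lemma inj_act_mon: "bij g \<Longrightarrow> inj (act_mon g)"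
  by (metis act_mon_inv_act_mon injI)

lemma mdeg_act_mon:
  assumes "bij g"
  shows "mdeg (act_mon g m) = mdeg m"
proof -
  have "(\<Sum>v\<in>UNIV. Poly_Mapping.lookup m (inv g v)) = (\<Sum>v\<in>UNIV. Poly_Mapping.lookup m v)"
    using assms by (intro sum.reindex_bij_betw) (simp add: bij_imp_bij_inv)
  then show ?thesis by (simp add: mdeg_eq_sum[of UNIV] lookup_act_mon)
qed

lemma total_order_twist_order:
  assumes "total_order ord" "bij g"
  shows "total_order (twist_order ord g)"
  unfolding total_order_def twist_order_def
proof (intro conjI allI impI)
  fix a b
  assume "ord (act_mon g a) (act_mon g b) \<and> ord (act_mon g b) (act_mon g a)"
  then have "act_mon g a = act_mon g b" using total_order_antisym[OF assms(1)] by blast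
  then show "a = b" using inj_act_mon[OF assms(2)] by (simp add: inj_eq)
qed (use assms(1) in \<open>unfold total_order_def, blast+\<close>)

lemma monomial_order_twist_order:
  assumes "monomial_order ord" "bij g"
  shows "monomial_order (twist_order ord g)"
  using assms(1) total_order_twist_order[OF _ assms(2)]
  unfolding monomial_order_iff_total_order by (auto simp: twist_order_def act_mon_add act_mon_zero)

lemma lookup_act_poly:
  assumes "bij g"
  shows "Poly_Mapping.lookup (act_poly g h) m = Poly_Mapping.lookup h (act_mon (inv g) m)"
proof -
  have "Poly_Mapping.lookup (act_poly g h) m =
      (\<Sum>\<mu>\<in>Poly_Mapping.keys h. if \<mu> = act_mon (inv g) m then Poly_Mapping.lookup h \<mu> else 0)"
    unfolding act_poly_def lookup_sum lookup_single when_def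
    by (rule sum.cong) (auto simp: act_mon_inv_act_mon[OF assms] act_mon_act_mon_inv[OF assms])
  then show ?thesis by (simp add: in_keys_iff)
qed

lemma keys_act_poly:
  assumes "bij g"
  shows "Poly_Mapping.keys (act_poly g h) = act_mon g ` Poly_Mapping.keys h"
proof
  show "Poly_Mapping.keys (act_poly g h) \<subseteq> act_mon g ` Poly_Mapping.keys h"
  proof
    fix m assume "m \<in> Poly_Mapping.keys (act_poly g h)"
    then have "act_mon (inv g) m \<in> Poly_Mapping.keys h"
      by (simp add: in_keys_iff lookup_act_poly[OF assms])
    then show "m \<in> act_mon g ` Poly_Mapping.keys h"
      using act_mon_act_mon_inv[OF assms, of m] by (metis image_eqI)
  qed
  show "act_mon g ` Poly_Mapping.keys h \<subseteq> Poly_Mapping.keys (act_poly g h)"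
    by (auto simp: in_keys_iff lookup_act_poly[OF assms] act_mon_inv_act_mon[OF assms])
qed

lemma act_poly_act_poly_inv:
  assumes "bij g"
  shows "act_poly g (act_poly (inv g) f) = f"
  using assms bij_imp_bij_inv[OF assms]
  by (simp add: poly_mapping_eq_iff fun_eq_iff lookup_act_poly inv_inv_eq act_mon_act_mon_inv)

lemma act_poly_image_monomial_ideal:
  assumes "bij g"
  shows "act_poly g ` {f :: ('v::finite, 'k::comm_monoid_add) mpoly. Poly_Mapping.keys f \<subseteq> L} =
    {f. Poly_Mapping.keys f \<subseteq> act_mon g ` L}"
proof
  show "act_poly g ` {f. Poly_Mapping.keys f \<subseteq> L} \<subseteq> {f :: ('v, 'k) mpoly. Poly_Mapping.keys f \<subseteq> act_mon g ` L}"
    by (auto simp: keys_act_poly[OF assms] intro!: imageI)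
  show "{f :: ('v, 'k) mpoly. Poly_Mapping.keys f \<subseteq> act_mon g ` L} \<subseteq> act_poly g ` {f. Poly_Mapping.keys f \<subseteq> L}"
  proof
    fix f :: "('v, 'k) mpoly" assume "f \<in> {f. Poly_Mapping.keys f \<subseteq> act_mon g ` L}"
    then have "Poly_Mapping.keys (act_poly (inv g) f) \<subseteq> L"
      using act_mon_inv_act_mon[OF assms] by (auto simp: keys_act_poly[OF bij_imp_bij_inv[OF assms]])
    then show "f \<in> act_poly g ` {f. Poly_Mapping.keys f \<subseteq> L}"
      using act_poly_act_poly_inv[OF assms, of f] by (metis image_eqI mem_Collect_eq)
  qed
qed

lemma lead_mon_twist_order:
  assumes "total_order ord" "bij g" "h \<noteq> 0"
    and keys: "Poly_Mapping.keys h' = act_mon g ` Poly_Mapping.keys h"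
  shows "lead_mon (twist_order ord (inv g)) h' = act_mon g (lead_mon ord h)"
proof -
  have "total_order (twist_order ord (inv g))"
    using total_order_twist_order[OF assms(1) bij_imp_bij_inv[OF assms(2)]] .
  then show ?thesis
    using keys lead_mon_in_keys[OF assms(1,3)] lead_mon_greatest[OF assms(1)]
    by (intro lead_mon_eqI) (auto simp: twist_order_def act_mon_inv_act_mon[OF assms(2)])
qed


section \<open>Leading monomials under a permutation of the variables\<close>

lemma image_eq_if_card_level_sets_eq:
  assumes "inj f" "f ` A \<subseteq> B" "\<And>x. deg (f x) = deg x" "\<And>t. finite {x. deg x = t}"
    and "\<And>t. card (A \<inter> {x. deg x = t}) = card (B \<inter> {x. deg x = t})"
  shows "f ` A = B"
proof
  show "B \<subseteq> f ` A"
  proof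
    fix y assume "y \<in> B"
    define S where "S = {x. deg x = deg y}"
    have "f ` (A \<inter> S) \<subseteq> B \<inter> S" using assms(2,3) unfolding S_def by auto
    moreover have "card (f ` (A \<inter> S)) = card (B \<inter> S)"
      using card_image[OF inj_on_subset[OF assms(1)]] assms(5) unfolding S_def by simp
    moreover have "finite (B \<inter> S)" using assms(4) unfolding S_def by simp
    ultimately have "f ` (A \<inter> S) = B \<inter> S" by (intro card_seteq) simp_all
    then show "y \<in> f ` A" using \<open>y \<in> B\<close> unfolding S_def by blast
  qed
qed (rule assms(2))

lemma lead_monomial_low_degree_factor:
  assumes "is_ideal I" "monomial_order ord" "generated_in_degrees_le (initial_ideal ord I) d"
    and "\<mu> \<in> lead_monomials ord I"
  obtains \<alpha> \<nu> where "\<mu> = \<alpha> + \<nu>" "\<nu> \<in> lead_monomials ord I" "mdeg \<nu> \<le> d"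
proof -
  let ?J = "initial_ideal ord I"
  have "Poly_Mapping.single \<mu> 1 \<in> ?J"
    using assms(4) by (simp add: initial_ideal_eq_monomial_ideal[OF assms(1,2)])
  then have "Poly_Mapping.single \<mu> 1 \<in> ideal_gen {f \<in> ?J. deg_le f d}"
    using assms(3) unfolding generated_in_degrees_le_def by blast
  then obtain f \<nu> \<alpha> where f: "f \<in> ?J" "deg_le f d" and "\<nu> \<in> Poly_Mapping.keys f" "\<mu> = \<alpha> + \<nu>"
    by (rule keys_ideal_gen) auto
  moreover from this have "\<nu> \<in> lead_monomials ord I" "mdeg \<nu> \<le> d"
    using f unfolding initial_ideal_eq_monomial_ideal[OF assms(1,2)] deg_le_def mon_def by auto
  ultimately show ?thesis using that by blast
qed

lemma act_mon_lead_monomial_low_degree: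
  assumes "homogeneous_ideal I" "monomial_order ord" "acts_monomially G I d" "g \<in> G" "bij g"
    and "\<nu> \<in> lead_monomials ord I" "mdeg \<nu> \<le> d"
  shows "act_mon g \<nu> \<in> lead_monomials (twist_order ord (inv g)) I"
proof -
  have ord: "total_order ord" using assms(2) by (rule monomial_order_imp_total_order)
  obtain h where h: "h \<in> I" "h \<noteq> 0" "lead_mon ord h = \<nu>" "Poly_Mapping.keys h \<subseteq> {m. mdeg m = mdeg \<nu>}"
    using lead_monomials_homogeneous_witness[OF assms(1) ord assms(6)] by blast
  have "deg_le h d" using h(4) assms(7) unfolding deg_le_def mon_def by auto
  then obtain h' where "h' \<in> I" "mon h' = mon (act_poly g h)"
    using assms(3,4) h(1) unfolding acts_monomially_def by blast
  then have keys: "Poly_Mapping.keys h' = act_mon g ` Poly_Mapping.keys h"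
    by (simp add: mon_def keys_act_poly[OF assms(5)])
  then have "h' \<noteq> 0" using h(2) by auto
  moreover have "lead_mon (twist_order ord (inv g)) h' = act_mon g \<nu>"
    using lead_mon_twist_order[OF ord assms(5) h(2) keys] h(3) by simp
  ultimately show ?thesis using \<open>h' \<in> I\<close> unfolding lead_monomials_def by (metis DiffI image_eqI singletonD)
qed

lemma act_mon_image_lead_monomials_subset:
  assumes "homogeneous_ideal I" "monomial_order ord" "acts_monomially G I d" "g \<in> G" "bij g"
    and "generated_in_degrees_le (initial_ideal ord I) d"
  shows "act_mon g ` lead_monomials ord I \<subseteq> lead_monomials (twist_order ord (inv g)) I"
proof
  have I: "is_ideal I" using assms(1) unfolding homogeneous_ideal_def by blast
  fix x assume "x \<in> act_mon g ` lead_monomials ord I"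
  then obtain \<mu> where "\<mu> \<in> lead_monomials ord I" "x = act_mon g \<mu>" by blast
  moreover obtain \<alpha> \<nu> where "\<mu> = \<alpha> + \<nu>" "\<nu> \<in> lead_monomials ord I" "mdeg \<nu> \<le> d"
    using lead_monomial_low_degree_factor[OF I assms(2,6) \<open>\<mu> \<in> lead_monomials ord I\<close>] .
  moreover have "monomial_order (twist_order ord (inv g))"
    using monomial_order_twist_order[OF assms(2) bij_imp_bij_inv[OF assms(5)]] .
  ultimately show "x \<in> lead_monomials (twist_order ord (inv g)) I"
    using act_mon_lead_monomial_low_degree[OF assms(1-5)] lead_monomials_add[OF I]
    by (simp add: act_mon_add)
qed

theorem mainTheorem10:
  fixes G :: "('v::finite \<Rightarrow> 'v) set"
    and I :: "('v, 'k::field) mpoly set"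
    and ord :: "'v monom \<Rightarrow> 'v monom \<Rightarrow> bool"
    and d :: nat
  assumes "perm_group G"
    and "homogeneous_ideal I"
    and "monomial_order ord"
    and "acts_monomially G I d"
    and "generated_in_degrees_le (initial_ideal ord I) d"
  shows "\<forall>g\<in>G. act_poly g ` initial_ideal ord I = initial_ideal (twist_order ord (inv g)) I"
proof
  fix g assume "g \<in> G"
  then have g: "bij g" using assms(1) unfolding perm_group_def by blast
  have I: "is_ideal I" using assms(2) unfolding homogeneous_ideal_def by blast
  let ?ord' = "twist_order ord (inv g)"
  have ord': "monomial_order ?ord'"
    using monomial_order_twist_order[OF assms(3) bij_imp_bij_inv[OF g]] .
  have "act_mon g ` lead_monomials ord I = lead_monomials ?ord' I"
  proof (rule image_eq_if_card_level_sets_eq[where deg = mdeg])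
    show "act_mon g ` lead_monomials ord I \<subseteq> lead_monomials ?ord' I"
      using act_mon_image_lead_monomials_subset[OF assms(2,3,4) \<open>g \<in> G\<close> g assms(5)] .
    fix t
    show "card (lead_monomials ord I \<inter> {m. mdeg m = t}) = card (lead_monomials ?ord' I \<inter> {m. mdeg m = t})"
      using assms(2) assms(3) ord'
      by (simp add: card_lead_monomials_degree_eq_dim monomial_order_imp_total_order)
  qed (simp_all add: inj_act_mon[OF g] mdeg_act_mon[OF g] finite_mdeg_eq)
  then show "act_poly g ` initial_ideal ord I = initial_ideal ?ord' I"
    by (simp add: initial_ideal_eq_monomial_ideal[OF I] assms(3) ord' act_poly_image_monomial_ideal[OF g])
qed

end
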